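(* Let $\{x_k\}$, $\{d_k\}$ be generated by Algorithm 1 or Algorithm 2 (described in the context) under the Standing Assumption and Matrix Assumption of the context, and suppose the algorithm does not terminate finitely. Write $d_k=u_k+v_k$ with $u_k\in\mathrm{Null}(J_k)$, $v_k\in\mathrm{Range}(J_k^T)$. Then there exists $\kappa_{uv}>0$ such that for any $k\in\mathbb{N}$, if $\|u_k\|_2^2\ge\kappa_{uv}\|v_k\|_2^2$, then $\tfrac12d_k^TH_kd_k\ge\tfrac14\zeta\|u_k\|_2^2$.
   Context: Notation: $g_k=\nabla f(x_k)$, $c_k=c(x_k)$, $J_k=\nabla c(x_k)^T$; $\phi(x,\tau)=\tau f(x)+\|c(x)\|_1$; $\Delta q(x,\tau,g,H,d)=-\tau(g^Td+\frac12\max\{d^THd,0\})+\|c(x)\|_1$. Matrix Assumption: symmetric $H_k$ with $\|H_k\|_2\le\kappa_H$ and $u^TH_ku\ge\zeta\|u\|_2^2$ whenever $J_ku=0$ (constants $\kappa_H,\zeta>0$). Common iteration: $(d_k,y_k)$ solves $H_kd_k+J_k^Ty_k=-g_k$, $J_kd_k=-c_k$; stop if $g_k+J_k^Ty_k=0$ and $c_k=0$. $\tau_k^{trial}=\infty$ if $g_k^Td_k+\max\{d_k^TH_kd_k,0\}\le0$, else $\frac{(1-\sigma)\|c_k\|_1}{g_k^Td_k+\max\{d_k^TH_kd_k,0\}}$; $\tau_k=\tau_{k-1}$ if $\tau_{k-1}\le\tau_k^{trial}$, else $(1-\epsilon)\tau_k^{trial}$; $x_{k+1}=x_k+\alpha_kd_k$.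 (SD) for trial $\alpha$: $\phi(x_k+\alpha d_k,\tau_k)\le\phi(x_k,\tau_k)-\eta\alpha\Delta q(x_k,\tau_k,g_k,H_k,d_k)$. Algorithm 1 (inputs $\tau_{-1}>0$, $\epsilon,\sigma,\eta\in(0,1)$, $\rho>1$, $L_{-1}>0$, $\gamma_{-1,i}>0$): choose $L_{k,0}\in(0,L_{k-1}]$, $\gamma_{k,i,0}\in(0,\gamma_{k-1,i}]$; for $j=0,1,\dots$ with $\Lambda_{k,j}=\tau_kL_{k,j}+\sum_i\gamma_{k,i,j}$: $\widehat\alpha_{k,j}=\frac{2(1-\eta)\Delta q(x_k,\tau_k,g_k,H_k,d_k)}{\Lambda_{k,j}\|d_k\|_2^2}$, $\widetilde\alpha_{k,j}=\widehat\alpha_{k,j}-\frac{4\|c_k\|_1}{\Lambda_{k,j}\|d_k\|_2^2}$; $\alpha_{k,j}=\widehat\alpha_{k,j}$ if $\widehat\alpha_{k,j}<1$, $1$ if $\widetilde\alpha_{k,j}\le1\le\widehat\alpha_{k,j}$, $\widetilde\alpha_{k,j}$ if $\widetilde\alpha_{k,j}>1$; accept ($\alpha_k=\alpha_{k,j}$, $L_k=L_{k,j}$, $\gamma_{k,i}=\gamma_{k,i,j}$) if (SD) holds or if both $f(x_k+\alpha_{k,j}d_k)\le f(x_k)+\alpha_{k,j}g_k^Td_k+\frac12L_{k,j}\alpha_{k,j}^2\|d_k\|_2^2$ (LF) and $|c_i(x_k+\alpha_{k,j}d_k)|\le|c_i(x_k)+\alpha_{k,j}\nabla c_i(x_k)^Td_k|+\frac12\gamma_{k,i,j}\alpha_{k,j}^2\|d_k\|_2^2$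 (LC$_i$) for all $i$; otherwise multiply $L_{k,j}$ by $\rho$ if (LF) fails and $\gamma_{k,i,j}$ by $\rho$ if (LC$_i$) fails. Algorithm 2 (inputs $\tau_{-1}>0$, $\epsilon,\sigma,\eta,\nu\in(0,1)$, $\alpha>0$): $\alpha_k=\nu^j\alpha$ for the smallest $j\ge0$ such that (SD) holds. Standing Assumption: an open convex set $\mathcal X$ contains all iterates and trial points $x_k+\alpha_{k,j}d_k$; $f$ is $C^1$, bounded below on $\mathcal X$, $\nabla f$ bounded and $L$-Lipschitz on $\mathcal X$; $c$, $\nabla c^T$ bounded on $\mathcal X$; $\nabla c_i$ is $\gamma_i$-Lipschitz on $\mathcal X$; singular values of $\nabla c(x)^T$ bounded away from zero uniformly over $\mathcal X$. *)

theory Defs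
  imports "HOL-Analysis.Analysis"
begin

text \<open>Vectors in R^n are real^'n, constraint values in R^m are real^'m,
  the Jacobian J(x) = (nabla c(x))^T is an m x n matrix real^'n^'m whose
  i-th row is nabla c_i(x).\<close>

definition l1norm :: "real^'m \<Rightarrow> real" where
  "l1norm v = (\<Sum>i\<in>UNIV. \<bar>v $ i\<bar>)"

definition phi :: "(real^'n \<Rightarrow> real) \<Rightarrow> (real^'n \<Rightarrow> real^'m) \<Rightarrow> real^'n \<Rightarrow> real \<Rightarrow> real" where
  "phi f c x \<tau> = \<tau> * f x + l1norm (c x)"

text \<open>Delta q(x,tau,g,H,d); x enters only through c(x), passed as cx.\<close>
definition dq :: "real^'m \<Rightarrow> real \<Rightarrow> real^'n \<Rightarrow> real^'n^'n \<Rightarrow> real^'n \<Rightarrow> real" where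
  "dq cx \<tau> g H d = - \<tau> * (g \<bullet> d + 1/2 * max (d \<bullet> (H *v d)) 0) + l1norm cx"

text \<open>Merit parameter update; tau_trial = infinity handled by the first branch.\<close>
definition tau_update :: "real \<Rightarrow> real \<Rightarrow> real \<Rightarrow> real^'n \<Rightarrow> real^'n^'n \<Rightarrow> real^'n \<Rightarrow> real^'m \<Rightarrow> real" where
  "tau_update \<epsilon> \<sigma> tp g H d cx =
     (let s = g \<bullet> d + max (d \<bullet> (H *v d)) 0 in
      if s \<le> 0 then tp
      else (let t = (1 - \<sigma>) * l1norm cx / s in if tp \<le> t then tp else (1 - \<epsilon>) * t))"

definition SD :: "(real^'n \<Rightarrow> real) \<Rightarrow> (real^'n \<Rightarrow> real^'m) \<Rightarrow> real \<Rightarrow> real^'n \<Rightarrow> real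
                  \<Rightarrow> real^'n \<Rightarrow> real^'n^'n \<Rightarrow> real^'n \<Rightarrow> real \<Rightarrow> bool" where
  "SD f c \<eta> x \<tau> g H d a \<longleftrightarrow>
     phi f c (x + a *\<^sub>R d) \<tau> \<le> phi f c x \<tau> - \<eta> * a * dq (c x) \<tau> g H d"

definition LF :: "(real^'n \<Rightarrow> real) \<Rightarrow> real^'n \<Rightarrow> real^'n \<Rightarrow> real^'n \<Rightarrow> real \<Rightarrow> real \<Rightarrow> bool" where
  "LF f x g d L a \<longleftrightarrow> f (x + a *\<^sub>R d) \<le> f x + a * (g \<bullet> d) + 1/2 * L * a^2 * (norm d)^2"

definition LC :: "(real^'n \<Rightarrow> real^'m) \<Rightarrow> real^'n^'m \<Rightarrow> real^'n \<Rightarrow> real^'n \<Rightarrow> 'm \<Rightarrow> real \<Rightarrow> real \<Rightarrow> bool" where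
  "LC c J x d i \<gamma> a \<longleftrightarrow>
     \<bar>c (x + a *\<^sub>R d) $ i\<bar> \<le> \<bar>c x $ i + a * ((J $ i) \<bullet> d)\<bar> + 1/2 * \<gamma> * a^2 * (norm d)^2"

definition alpha1 :: "real \<Rightarrow> real^'m \<Rightarrow> real \<Rightarrow> real^'n \<Rightarrow> real^'n^'n \<Rightarrow> real^'n \<Rightarrow> real \<Rightarrow> ('m \<Rightarrow> real) \<Rightarrow> real" where
  "alpha1 \<eta> cx \<tau> g H d L \<gamma> =
     (let \<Lambda> = \<tau> * L + (\<Sum>i\<in>UNIV. \<gamma> i);
          ah = 2 * (1 - \<eta>) * dq cx \<tau> g H d / (\<Lambda> * (norm d)^2);
          atl = ah - 4 * l1norm cx / (\<Lambda> * (norm d)^2)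
      in if ah < 1 then ah else if atl \<le> 1 then 1 else atl)"

text \<open>Common iteration (the linear system, tau update and x update), with tau_{-1} = tau0.\<close>
definition common_iter where
  "common_iter f gf c Jc \<tau>0 \<epsilon> \<sigma> x d y \<tau> \<alpha> H \<longleftrightarrow>
     (\<forall>k. H k *v d k + transpose (Jc (x k)) *v y k = - gf (x k)
        \<and> Jc (x k) *v d k = - c (x k)
        \<and> \<tau> k = tau_update \<epsilon> \<sigma> (if k = 0 then \<tau>0 else \<tau> (k - 1)) (gf (x k)) (H k) (d k) (c (x k))
        \<and> x (Suc k) = x k + \<alpha> k *\<^sub>R d k)"

text \<open>Algorithm 1. Ls k j = L_{k,j}, \<gamma>s k j i = gamma_{k,i,j}, jk k = accepted inner index.
  Trial points are required to lie in X (Standing Assumption).\<close>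
definition alg1 where
  "alg1 f gf c Jc X \<tau>0 \<epsilon> \<sigma> \<eta> \<rho> L0 \<gamma>0 x d y \<tau> \<alpha> H Ls \<gamma>s jk \<longleftrightarrow>
     0 < \<tau>0 \<and> 0 < \<epsilon> \<and> \<epsilon> < 1 \<and> 0 < \<sigma> \<and> \<sigma> < 1 \<and> 0 < \<eta> \<and> \<eta> < 1 \<and> 1 < \<rho> \<and> 0 < L0
     \<and> (\<forall>i. 0 < \<gamma>0 i)
     \<and> common_iter f gf c Jc \<tau>0 \<epsilon> \<sigma> x d y \<tau> \<alpha> H
     \<and> (\<forall>k. 0 < Ls k 0 \<and> Ls k 0 \<le> (if k = 0 then L0 else Ls (k - 1) (jk (k - 1)))
          \<and> (\<forall>i. 0 < \<gamma>s k 0 i \<and> \<gamma>s k 0 i \<le> (if k = 0 then \<gamma>0 i else \<gamma>s (k - 1) (jk (k - 1)) i))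
          \<and> (\<forall>j \<le> jk k. x k + alpha1 \<eta> (c (x k)) (\<tau> k) (gf (x k)) (H k) (d k) (Ls k j) (\<gamma>s k j) *\<^sub>R d k \<in> X)
          \<and> (\<forall>j < jk k.
               (let a = alpha1 \<eta> (c (x k)) (\<tau> k) (gf (x k)) (H k) (d k) (Ls k j) (\<gamma>s k j) in
                \<not> SD f c \<eta> (x k) (\<tau> k) (gf (x k)) (H k) (d k) a
                \<and> \<not> (LF f (x k) (gf (x k)) (d k) (Ls k j) a
                      \<and> (\<forall>i. LC c (Jc (x k)) (x k) (d k) i (\<gamma>s k j i) a))
                \<and> Ls k (Suc j) = (if LF f (x k) (gf (x k)) (d k) (Ls k j) a then Ls k j else \<rho> * Ls k j)
                \<and> (\<forall>i. \<gamma>s k (Suc j) i =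
                       (if LC c (Jc (x k)) (x k) (d k) i (\<gamma>s k j i) a then \<gamma>s k j i else \<rho> * \<gamma>s k j i))))
          \<and> (let a = alpha1 \<eta> (c (x k)) (\<tau> k) (gf (x k)) (H k) (d k) (Ls k (jk k)) (\<gamma>s k (jk k)) in
               (SD f c \<eta> (x k) (\<tau> k) (gf (x k)) (H k) (d k) a
                \<or> (LF f (x k) (gf (x k)) (d k) (Ls k (jk k)) a
                   \<and> (\<forall>i. LC c (Jc (x k)) (x k) (d k) i (\<gamma>s k (jk k) i) a)))
               \<and> \<alpha> k = a))"

definition alg2 where
  "alg2 f gf c Jc X \<tau>0 \<epsilon> \<sigma> \<eta> \<nu> abar x d y \<tau> \<alpha> H \<longleftrightarrow>
     0 < \<tau>0 \<and> 0 < \<epsilon> \<and> \<epsilon> < 1 \<and> 0 < \<sigma> \<and> \<sigma> < 1 \<and> 0 < \<eta> \<and> \<eta> < 1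
     \<and> 0 < \<nu> \<and> \<nu> < 1 \<and> 0 < abar
     \<and> common_iter f gf c Jc \<tau>0 \<epsilon> \<sigma> x d y \<tau> \<alpha> H
     \<and> (\<forall>k. \<exists>j. \<alpha> k = \<nu> ^ j * abar
          \<and> SD f c \<eta> (x k) (\<tau> k) (gf (x k)) (H k) (d k) (\<nu> ^ j * abar)
          \<and> (\<forall>i < j. \<not> SD f c \<eta> (x k) (\<tau> k) (gf (x k)) (H k) (d k) (\<nu> ^ i * abar))
          \<and> (\<forall>i \<le> j. x k + (\<nu> ^ i * abar) *\<^sub>R d k \<in> X))"

end

theory Submission
  imports Defs
begin

text \<open>Only the Matrix Assumption enters. Expanding \<open>d = u + v\<close>, the curvature condition
  on the null space gives \<open>u \<bullet> H u \<ge> \<zeta> \<parallel>u\<parallel>\<^sup>2\<close>, while the bound \<open>\<parallel>H\<parallel> \<le> \<kappa>H\<close> costs at most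
  \<open>2\<kappa>H\<parallel>u\<parallel>\<parallel>v\<parallel> + \<kappa>H\<parallel>v\<parallel>\<^sup>2\<close> for the remaining terms. Splitting the cross term by AM-GM with
  weight \<open>\<zeta>/(4\<kappa>H)\<close>, both error terms are absorbed into \<open>\<zeta>/2 \<parallel>u\<parallel>\<^sup>2\<close> as soon as
  \<open>\<parallel>u\<parallel>\<^sup>2 \<ge> \<kappa>uv \<parallel>v\<parallel>\<^sup>2\<close> with \<open>\<kappa>uv = 4\<kappa>H(4\<kappa>H/\<zeta> + 1)/\<zeta>\<close>.\<close>

lemma abs_inner_le_onorm:
  assumes "bounded_linear T"
  shows "\<bar>a \<bullet> T b\<bar> \<le> onorm T * norm a * norm b"
proof -
  have "\<bar>a \<bullet> T b\<bar> \<le> norm a * norm (T b)" by (rule Cauchy_Schwarz_ineq2)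
  also have "\<dots> \<le> norm a * (onorm T * norm b)"
    using onorm[OF assms] by (simp add: mult_left_mono)
  finally show ?thesis by (simp add: algebra_simps)
qed

lemma inner_add_quadratic_form_ge:
  assumes T: "bounded_linear T"
  shows "u \<bullet> T u - 2 * onorm T * norm u * norm v - onorm T * (norm v)\<^sup>2 \<le> (u + v) \<bullet> T (u + v)"
proof -
  have expand: "(u + v) \<bullet> T (u + v) = u \<bullet> T u + u \<bullet> T v + v \<bullet> T u + v \<bullet> T v"
    using linear_add[OF bounded_linear.linear[OF T]] by (simp add: inner_add_left inner_add_right)
  have "- (onorm T * norm u * norm v) \<le> u \<bullet> T v"
    using abs_inner_le_onorm[OF T, of u v] by linarith
  moreover have "- (onorm T * norm u * norm v) \<le> v \<bullet> T u"
    using abs_inner_le_onorm[OF T, of v u] by (simp add: mult_ac)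
  moreover have "- (onorm T * (norm v)\<^sup>2) \<le> v \<bullet> T v"
    using abs_inner_le_onorm[OF T, of v v] by (simp add: power2_eq_square mult_ac)
  ultimately show ?thesis using expand by linarith
qed

lemma cross_terms_absorbed:
  fixes K z p q :: real
  assumes K: "0 < K" and z: "0 < z" and "0 \<le> p" "0 \<le> q"
    and dominant: "4 * K * (4 * K / z + 1) / z * q\<^sup>2 \<le> p\<^sup>2"
  shows "z / 2 * p\<^sup>2 \<le> z * p\<^sup>2 - 2 * K * p * q - K * q\<^sup>2"
proof -
  define t where "t = z / (4 * K)"
  have t: "0 < t" using K z by (simp add: t_def)
  have "0 \<le> (t * p - q)\<^sup>2 / t" using t by simp
  also have "\<dots> = t * p\<^sup>2 - 2 * p * q + q\<^sup>2 / t"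
    using t by (simp add: power2_eq_square field_simps)
  finally have "2 * p * q \<le> t * p\<^sup>2 + q\<^sup>2 / t" by simp
  then have "K * (2 * p * q) \<le> K * (t * p\<^sup>2 + q\<^sup>2 / t)"
    using K by (simp add: mult_left_mono)
  then have "2 * K * p * q \<le> K * t * p\<^sup>2 + K * q\<^sup>2 / t"
    by (simp add: algebra_simps)
  also have "\<dots> = z / 4 * p\<^sup>2 + K * (4 * K / z) * q\<^sup>2"
    using K z by (simp add: t_def)
  finally have "2 * K * p * q + K * q\<^sup>2 \<le> z / 4 * p\<^sup>2 + K * (4 * K / z + 1) * q\<^sup>2"
    by (simp add: algebra_simps)
  also have "K * (4 * K / z + 1) * q\<^sup>2 = z / 4 * (4 * K * (4 * K / z + 1) / z * q\<^sup>2)"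
    using z by (simp add: field_simps)
  also have "\<dots> \<le> z / 4 * p\<^sup>2"
    using dominant z by (intro mult_left_mono) auto
  finally show ?thesis by simp
qed

lemma quadratic_form_ge_half_curvature:
  assumes T: "bounded_linear T" and K: "onorm T \<le> K" "0 < K" and z: "0 < z"
    and curvature: "z * (norm u)\<^sup>2 \<le> u \<bullet> T u"
    and dominant: "4 * K * (4 * K / z + 1) / z * (norm v)\<^sup>2 \<le> (norm u)\<^sup>2"
  shows "z / 2 * (norm u)\<^sup>2 \<le> (u + v) \<bullet> T (u + v)"
proof -
  have "z / 2 * (norm u)\<^sup>2 \<le> z * (norm u)\<^sup>2 - 2 * K * norm u * norm v - K * (norm v)\<^sup>2"
    using cross_terms_absorbed[OF K(2) z _ _ dominant] by simp
  also have "\<dots> \<le> u \<bullet> T u - 2 * onorm T * norm u * norm v - onorm T * (norm v)\<^sup>2"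
  proof -
    have "onorm T * norm u * norm v \<le> K * norm u * norm v"
      "onorm T * (norm v)\<^sup>2 \<le> K * (norm v)\<^sup>2"
      using K(1) by (simp_all add: mult_right_mono)
    then show ?thesis using curvature by linarith
  qed
  also have "\<dots> \<le> (u + v) \<bullet> T (u + v)"
    by (rule inner_add_quadratic_form_ge[OF T])
  finally show ?thesis .
qed

theorem lemma2p10:
  fixes f :: "real^'n \<Rightarrow> real" and gf :: "real^'n \<Rightarrow> real^'n"
    and c :: "real^'n \<Rightarrow> real^'m" and Jc :: "real^'n \<Rightarrow> real^'n^'m"
    and X :: "(real^'n) set"
    and x d :: "nat \<Rightarrow> real^'n" and y :: "nat \<Rightarrow> real^'m"
    and \<tau> \<alpha> :: "nat \<Rightarrow> real" and H :: "nat \<Rightarrow> real^'n^'n"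
    and Ls :: "nat \<Rightarrow> nat \<Rightarrow> real" and \<gamma>s :: "nat \<Rightarrow> nat \<Rightarrow> 'm \<Rightarrow> real" and jk :: "nat \<Rightarrow> nat"
    and L \<kappa>H \<zeta> :: real and \<gamma> :: "'m \<Rightarrow> real"
  assumes X_open: "open X" and X_convex: "convex X"
    and iter_in_X: "\<forall>k. x k \<in> X"
    and f_deriv: "\<forall>z\<in>X. (f has_derivative (\<lambda>h. gf z \<bullet> h)) (at z)"
    and gf_cont: "continuous_on X gf"
    and f_bdd_below: "bdd_below (f ` X)"
    and gf_bounded: "bounded (gf ` X)"
    and gf_lipschitz: "L-lipschitz_on X gf"
    and c_deriv: "\<forall>z\<in>X. (c has_derivative (\<lambda>h. Jc z *v h)) (at z)"
    and c_bounded: "bounded (c ` X)"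
    and Jc_bounded: "bounded (Jc ` X)"
    and gradc_lipschitz: "\<forall>i. (\<gamma> i)-lipschitz_on X (\<lambda>z. Jc z $ i)"
    and sing_vals: "\<exists>s>0. \<forall>z\<in>X. \<forall>w. s * norm w \<le> norm (transpose (Jc z) *v w)"
    and H_sym: "\<forall>k. transpose (H k) = H k"
    and \<kappa>H_pos: "0 < \<kappa>H" and \<zeta>_pos: "0 < \<zeta>"
    and H_bound: "\<forall>k. onorm (\<lambda>w. H k *v w) \<le> \<kappa>H"
    and H_curv: "\<forall>k u. Jc (x k) *v u = 0 \<longrightarrow> u \<bullet> (H k *v u) \<ge> \<zeta> * (norm u)^2"
    and alg: "(\<exists>\<tau>0 \<epsilon> \<sigma> \<eta> \<rho> L0 \<gamma>0.
                 alg1 f gf c Jc X \<tau>0 \<epsilon> \<sigma> \<eta> \<rho> L0 \<gamma>0 x d y \<tau> \<alpha> H Ls \<gamma>s jk)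
            \<or> (\<exists>\<tau>0 \<epsilon> \<sigma> \<eta> \<nu> abar. alg2 f gf c Jc X \<tau>0 \<epsilon> \<sigma> \<eta> \<nu> abar x d y \<tau> \<alpha> H)"
    and no_termination: "\<forall>k. \<not> (gf (x k) + transpose (Jc (x k)) *v y k = 0 \<and> c (x k) = 0)"
  shows "\<exists>\<kappa>uv>0. \<forall>k u v.
           Jc (x k) *v u = 0 \<and> v \<in> range (\<lambda>w. transpose (Jc (x k)) *v w) \<and> d k = u + v
           \<and> (norm u)^2 \<ge> \<kappa>uv * (norm v)^2
           \<longrightarrow> 1/2 * (d k \<bullet> (H k *v d k)) \<ge> 1/4 * \<zeta> * (norm u)^2"
proof (intro exI[of _ "4 * \<kappa>H * (4 * \<kappa>H / \<zeta> + 1) / \<zeta>"] conjI allI impI)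
  show "0 < 4 * \<kappa>H * (4 * \<kappa>H / \<zeta> + 1) / \<zeta>"
    using \<kappa>H_pos \<zeta>_pos by (simp add: add_pos_pos)
next
  fix k and u v :: "real^'n"
  assume "Jc (x k) *v u = 0 \<and> v \<in> range (\<lambda>w. transpose (Jc (x k)) *v w) \<and> d k = u + v
    \<and> (norm u)^2 \<ge> 4 * \<kappa>H * (4 * \<kappa>H / \<zeta> + 1) / \<zeta> * (norm v)^2"
  then have null: "Jc (x k) *v u = 0" and split: "d k = u + v"
    and dominant: "4 * \<kappa>H * (4 * \<kappa>H / \<zeta> + 1) / \<zeta> * (norm v)\<^sup>2 \<le> (norm u)\<^sup>2"
    by auto
  have "\<zeta> / 2 * (norm u)\<^sup>2 \<le> d k \<bullet> (H k *v d k)"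
    unfolding split
    using quadratic_form_ge_half_curvature[OF matrix_vector_mul_bounded_linear
        H_bound[rule_format, of k] \<kappa>H_pos \<zeta>_pos _ dominant] H_curv null
    by simp
  then show "1/2 * (d k \<bullet> (H k *v d k)) \<ge> 1/4 * \<zeta> * (norm u)^2" by simp
qed

end
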